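(* Let $F$ be a field of characteristic $3$ and let $L=psl_3(F)$. Then no maximal subalgebra of $L$ is semi-modular in $L$.
   Context: $psl_3(F)=sl_3(F)/F I$ (in characteristic 3 the identity matrix $I$ lies in $sl_3(F)$ and spans its centre). For subalgebras $U,B$ of a Lie algebra $L$, $\langle U,B\rangle$ denotes the subalgebra generated by $U\cup B$. A subalgebra $B$ covers a subalgebra $A$ if $A$ is a maximal subalgebra of $B$. $U$ is upper modular (um) in $L$ if whenever $B$ is a subalgebra of $L$ which covers $U\cap B$, then $\langle U,B\rangle$ covers $U$; $U$ is lower modular (lm) in $L$ if whenever $B$ is a subalgebra of $L$ such that $\langle U,B\rangle$ covers $U$, then $B$ covers $U\cap B$; $U$ is semi-modular (sm) in $L$ if it is both um and lm in $L$. *)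

theory Defs
  imports "HOL-Analysis.Analysis"
begin

text \<open>3x3 matrices over a field are modelled as the type 'a^3^3.
  sl_3(F) is the set of trace-zero matrices with the commutator bracket;
  psl_3(F) = sl_3(F)/F I is modelled as the set of cosets X + F I (X in sl_3(F)),
  with the induced vector space operations and bracket.\<close>

definition mtrace :: "'a::field ^3^3 \<Rightarrow> 'a" where
  "mtrace A = (\<Sum>i\<in>UNIV. A $ i $ i)"

definition msc :: "'a::field \<Rightarrow> 'a^3^3 \<Rightarrow> 'a^3^3" where
  "msc c A = (\<chi> i j. c * A $ i $ j)"

definition mbr :: "'a::field ^3^3 \<Rightarrow> 'a^3^3 \<Rightarrow> 'a^3^3" where
  "mbr A B = A ** B - B ** A"

definition sl3 :: "('a::field ^3^3) set" where
  "sl3 = {A. mtrace A = 0}"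

definition pcoset :: "'a::field ^3^3 \<Rightarrow> ('a^3^3) set" where
  "pcoset X = {X + mat c | c. True}"

definition psl3 :: "('a::field ^3^3) set set" where
  "psl3 = pcoset ` sl3"

definition pzero :: "('a::field ^3^3) set" where
  "pzero = pcoset 0"

definition padd :: "('a::field ^3^3) set \<Rightarrow> ('a^3^3) set \<Rightarrow> ('a^3^3) set" where
  "padd P Q = {X + Y | X Y. X \<in> P \<and> Y \<in> Q}"

definition psc :: "'a::field \<Rightarrow> ('a^3^3) set \<Rightarrow> ('a^3^3) set" where
  "psc c P = {msc c X + mat d | X d. X \<in> P}"

definition pbr :: "('a::field ^3^3) set \<Rightarrow> ('a^3^3) set \<Rightarrow> ('a^3^3) set" where
  "pbr P Q = {mbr X Y + mat d | X Y d. X \<in> P \<and> Y \<in> Q}"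

definition psl3_subalg :: "('a::field ^3^3) set set \<Rightarrow> bool" where
  "psl3_subalg U \<longleftrightarrow> U \<subseteq> psl3 \<and> pzero \<in> U
     \<and> (\<forall>P\<in>U. \<forall>Q\<in>U. padd P Q \<in> U)
     \<and> (\<forall>c. \<forall>P\<in>U. psc c P \<in> U)
     \<and> (\<forall>P\<in>U. \<forall>Q\<in>U. pbr P Q \<in> U)"

definition psl3_gen :: "('a::field ^3^3) set set \<Rightarrow> ('a^3^3) set set" where
  "psl3_gen S = \<Inter> {T. psl3_subalg T \<and> S \<subseteq> T}"

definition psl3_maxsub :: "('a::field ^3^3) set set \<Rightarrow> ('a^3^3) set set \<Rightarrow> bool" where
  "psl3_maxsub A B \<longleftrightarrow> psl3_subalg A \<and> psl3_subalg B \<and> A \<subset> B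
     \<and> \<not> (\<exists>C. psl3_subalg C \<and> A \<subset> C \<and> C \<subset> B)"

definition psl3_covers :: "('a::field ^3^3) set set \<Rightarrow> ('a^3^3) set set \<Rightarrow> bool" where
  "psl3_covers B A \<longleftrightarrow> psl3_maxsub A B"

definition psl3_um :: "('a::field ^3^3) set set \<Rightarrow> bool" where
  "psl3_um U \<longleftrightarrow> (\<forall>B. psl3_subalg B \<and> psl3_covers B (U \<inter> B)
      \<longrightarrow> psl3_covers (psl3_gen (U \<union> B)) U)"

definition psl3_lm :: "('a::field ^3^3) set set \<Rightarrow> bool" where
  "psl3_lm U \<longleftrightarrow> (\<forall>B. psl3_subalg B \<and> psl3_covers (psl3_gen (U \<union> B)) U
      \<longrightarrow> psl3_covers B (U \<inter> B))"

definition psl3_sm :: "('a::field ^3^3) set set \<Rightarrow> bool" where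
  "psl3_sm U \<longleftrightarrow> psl3_um U \<and> psl3_lm U"

end

theory Submission
  imports Defs
begin

(*
  Let M be maximal and lower modular.  If P is a subalgebra with P not contained in M, then
  the subalgebra generated by M and P is L, which covers M, so lower modularity forces P to cover
  M \<inter> P.  Take for P a two-dimensional abelian subalgebra F A + F B: it contains the line F A,
  so {0} is not maximal in P, hence M meets every such plane nontrivially.  For distinct indices
  i, j, k the planes F E_ik + F E_ij and F E_ik + F E_jk are abelian; the two nonzero elements of
  M they provide bracket to E_ik (unless one of them already is a multiple of E_ik).  So M
  contains every off-diagonal matrix unit, and these generate all of sl_3(F) by linear
  combinations and brackets, whence M = L, contradicting maximality.

  The argument never uses the characteristic; the hypothesis
  CHAR(F) = 3 is only what makes psl_3(F) differ from sl_3(F).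
*)

section \<open>Matrix arithmetic\<close>

lemma msc_add: "msc c (A + B) = msc c A + msc c B"
  by (simp add: vec_eq_iff msc_def algebra_simps)

lemma msc_add_scalar: "msc (a + b) A = msc a A + msc b A"
  by (simp add: vec_eq_iff msc_def algebra_simps)

lemma msc_zero [simp]: "msc c 0 = 0"
  and msc_zero_scalar [simp]: "msc 0 A = 0"
  and msc_one [simp]: "msc 1 A = A"
  and msc_msc [simp]: "msc c (msc d A) = msc (c * d) A"
  by (simp_all add: vec_eq_iff msc_def)

lemma mat_add: "mat (a + b) = mat a + (mat b :: 'a::field^3^3)"
  and msc_mat: "msc c (mat d) = (mat (c * d) :: 'a::field^3^3)"
  by (simp_all add: vec_eq_iff mat_def msc_def)

lemma msc_mult_left: "msc c A ** B = msc c (A ** B)"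
  and msc_mult_right: "A ** msc c B = msc c (A ** B)"
  by (simp_all add: vec_eq_iff matrix_matrix_mult_def msc_def sum_distrib_left ac_simps)

lemma matrix_add_rdistrib: "(B + C) ** A = B ** A + (C ** A :: 'a::field^3^3)"
  by (simp add: vec_eq_iff matrix_matrix_mult_def sum.distrib algebra_simps)

lemma mat_mult_left: "mat c ** A = msc c (A::'a::field^3^3)"
  and mat_mult_right: "A ** mat c = msc c (A::'a::field^3^3)"
  by (simp_all add: vec_eq_iff matrix_matrix_mult_def msc_def mat_def
      if_distrib if_distribR cong: if_cong)

text \<open>The bracket only depends on the cosets modulo scalar matrices; this is what makes the
  bracket of psl_3(F) well defined.\<close>
lemma mbr_shift: "mbr (X + mat a) (Y + mat b) = mbr X (Y::'a::field^3^3)"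
  by (simp add: mbr_def matrix_add_ldistrib matrix_add_rdistrib mat_mult_left mat_mult_right
      msc_mat msc_add mat_add mult.commute)

lemma mbr_commuting_comb:
  assumes "mbr A B = (0 :: 'a::field^3^3)"
  shows "mbr (msc a A + msc b B) (msc a' A + msc b' B) = 0"
proof -
  have BA: "B ** A = A ** B" using assms by (simp add: mbr_def)
  show ?thesis
    unfolding mbr_def
    by (simp add: matrix_add_ldistrib matrix_add_rdistrib msc_mult_left msc_mult_right BA)
       (simp add: vec_eq_iff msc_def algebra_simps)
qed

lemma mtrace_add: "mtrace (A + B) = mtrace A + mtrace B"
  and mtrace_msc: "mtrace (msc c A) = c * mtrace A"
  by (simp_all add: mtrace_def msc_def sum.distrib sum_distrib_left)

definition E :: "3 \<Rightarrow> 3 \<Rightarrow> 'a::field^3^3" where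
  "E i j = (\<chi> a b. if a = i \<and> b = j then 1 else 0)"

lemma E_entry: "(E i j :: 'a::field^3^3) $ a $ b = (if a = i \<and> b = j then 1 else 0)"
  by (simp add: E_def)

lemma E_mult: "(E i j ** E k l :: 'a::field^3^3) = (if j = k then E i l else 0)"
proof -
  have "(\<Sum>c\<in>UNIV. (E i j :: 'a^3^3) $ a $ c * E k l $ c $ b)
      = (\<Sum>c\<in>UNIV. if c = j then (if a = i \<and> j = k \<and> b = l then 1 else 0) else 0)" for a b
    by (rule sum.cong) (auto simp: E_entry)
  then show ?thesis by (simp add: vec_eq_iff matrix_matrix_mult_def E_entry)
qed

lemma mtrace_E: "i \<noteq> j \<Longrightarrow> mtrace (E i j :: 'a::field^3^3) = 0"
  unfolding mtrace_def E_def by (rule sum.neutral) auto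

lemma E_not_in_span:
  assumes "i \<noteq> j" "(i, j) \<noteq> (k, l)"
  shows "(E i j :: 'a::field^3^3) \<noteq> msc a (E k l) + mat c"
proof
  assume "(E i j :: 'a^3^3) = msc a (E k l) + mat c"
  then have "(E i j :: 'a^3^3) $ i $ j = (msc a (E k l) + mat c) $ i $ j" by simp
  then show False using assms by (auto simp: E_entry msc_def mat_def)
qed

lemma E_not_scalar: "i \<noteq> j \<Longrightarrow> (E i j :: 'a::field^3^3) \<noteq> mat c"
  using E_not_in_span[of i j j i 0 c] by simp

text \<open>Every traceless matrix is a combination of the six off-diagonal units and the two
  brackets [E_12, E_21] = E_11 - E_22 and [E_23, E_32] = E_22 - E_33.\<close>
lemma sl3_decomposition:
  fixes X :: "'a::field^3^3"
  assumes "mtrace X = 0"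
  shows "X = msc (X$1$2) (E 1 2) + msc (X$1$3) (E 1 3) + msc (X$2$1) (E 2 1)
    + msc (X$2$3) (E 2 3) + msc (X$3$1) (E 3 1) + msc (X$3$2) (E 3 2)
    + msc (X$1$1) (mbr (E 1 2) (E 2 1)) + msc (X$1$1 + X$2$2) (mbr (E 2 3) (E 3 2))"
proof -
  have "X$1$1 + X$2$2 + X$3$3 = 0" using assms by (simp add: mtrace_def sum_3)
  then have "X$3$3 = - (X$1$1 + X$2$2)" by (simp add: algebra_simps eq_neg_iff_add_eq_0)
  then show ?thesis
    by (simp add: vec_eq_iff forall_3 E_entry msc_def mbr_def E_mult)
qed

section \<open>Cosets modulo scalar matrices\<close>

lemma pcoset_mem: "Z \<in> pcoset X \<longleftrightarrow> (\<exists>c. Z = X + mat c)"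
  by (auto simp: pcoset_def)

lemma mem_pcoset_self: "X \<in> pcoset X"
  using pcoset_mem[of X X] by (metis add.right_neutral mat_0)

lemma pcoset_eqD: "pcoset X = pcoset Y \<Longrightarrow> \<exists>c. X = Y + mat c"
  using mem_pcoset_self pcoset_mem by metis

lemma padd_pcoset: "padd (pcoset X) (pcoset Y) = pcoset (X + Y)"
proof (rule set_eqI)
  fix Z
  show "Z \<in> padd (pcoset X) (pcoset Y) \<longleftrightarrow> Z \<in> pcoset (X + Y)"
  proof
    assume "Z \<in> padd (pcoset X) (pcoset Y)"
    then obtain a b where "Z = (X + mat a) + (Y + mat b)" by (auto simp: padd_def pcoset_mem)
    then have "Z = (X + Y) + mat (a + b)" by (simp add: mat_add algebra_simps)
    then show "Z \<in> pcoset (X + Y)" by (auto simp: pcoset_mem)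
  next
    assume "Z \<in> pcoset (X + Y)"
    then obtain c where "Z = (X + mat c) + Y" by (auto simp: pcoset_mem algebra_simps)
    moreover have "X + mat c \<in> pcoset X" by (auto simp: pcoset_mem)
    ultimately show "Z \<in> padd (pcoset X) (pcoset Y)"
      unfolding padd_def using mem_pcoset_self by blast
  qed
qed

lemma psc_pcoset: "psc c (pcoset X) = pcoset (msc c X)"
proof (rule set_eqI)
  fix Z
  show "Z \<in> psc c (pcoset X) \<longleftrightarrow> Z \<in> pcoset (msc c X)"
  proof
    assume "Z \<in> psc c (pcoset X)"
    then obtain a d where "Z = msc c (X + mat a) + mat d" by (auto simp: psc_def pcoset_mem)
    then have "Z = msc c X + mat (c * a + d)" by (simp add: msc_add msc_mat mat_add add.assoc)
    then show "Z \<in> pcoset (msc c X)" by (auto simp: pcoset_mem)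
  next
    assume "Z \<in> pcoset (msc c X)"
    then obtain d where "Z = msc c X + mat d" by (auto simp: pcoset_mem)
    then show "Z \<in> psc c (pcoset X)" unfolding psc_def using mem_pcoset_self by blast
  qed
qed

lemma pbr_pcoset: "pbr (pcoset X) (pcoset Y) = pcoset (mbr X Y)"
proof (rule set_eqI)
  fix Z
  show "Z \<in> pbr (pcoset X) (pcoset Y) \<longleftrightarrow> Z \<in> pcoset (mbr X Y)"
  proof
    assume "Z \<in> pbr (pcoset X) (pcoset Y)"
    then obtain a b d where "Z = mbr (X + mat a) (Y + mat b) + mat d"
      by (auto simp: pbr_def pcoset_mem)
    then show "Z \<in> pcoset (mbr X Y)" by (auto simp: pcoset_mem mbr_shift)
  next
    assume "Z \<in> pcoset (mbr X Y)"
    then obtain d where "Z = mbr X Y + mat d" by (auto simp: pcoset_mem)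
    then show "Z \<in> pbr (pcoset X) (pcoset Y)"
      unfolding pbr_def using mem_pcoset_self by blast
  qed
qed

lemma psl3_elem: "P \<in> psl3 \<Longrightarrow> \<exists>X. mtrace X = 0 \<and> P = pcoset X"
  by (auto simp: psl3_def sl3_def)

lemma subalg_add: "psl3_subalg M \<Longrightarrow> pcoset X \<in> M \<Longrightarrow> pcoset Y \<in> M \<Longrightarrow> pcoset (X + Y) \<in> M"
  and subalg_sc: "psl3_subalg M \<Longrightarrow> pcoset X \<in> M \<Longrightarrow> pcoset (msc c X) \<in> M"
  and subalg_br: "psl3_subalg M \<Longrightarrow> pcoset X \<in> M \<Longrightarrow> pcoset Y \<in> M \<Longrightarrow> pcoset (mbr X Y) \<in> M"
  unfolding psl3_subalg_def by (metis padd_pcoset, metis psc_pcoset, metis pbr_pcoset)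

section \<open>Lower modular maximal subalgebras meet every abelian plane\<close>

lemma gen_subalg:
  assumes "psl3_subalg (psl3 :: ('a::field^3^3) set set)" "S \<subseteq> psl3"
  shows "psl3_subalg (psl3_gen S)" "S \<subseteq> psl3_gen S" "psl3_gen S \<subseteq> (psl3 :: ('a^3^3) set set)"
proof -
  have fam: "psl3 \<in> {T. psl3_subalg T \<and> S \<subseteq> T}" using assms by auto
  show "S \<subseteq> psl3_gen S" "psl3_gen S \<subseteq> psl3" unfolding psl3_gen_def using fam by blast+
  then show "psl3_subalg (psl3_gen S)"
    unfolding psl3_subalg_def psl3_gen_def by blast
qed

text \<open>For a maximal, lower modular M: every subalgebra P not inside M covers M \<inter> P, because
  the subalgebra generated by M and P is all of psl_3(F), which covers M.\<close>
lemma lm_maximal_covers: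
  assumes mx: "psl3_maxsub M psl3" and lm: "psl3_lm M"
    and sP: "psl3_subalg P" and PnM: "\<not> P \<subseteq> M"
  shows "psl3_maxsub (M \<inter> P) P"
proof -
  have sL: "psl3_subalg (psl3 :: ('a::field^3^3) set set)"
    and MP: "M \<subset> psl3" and nC: "\<not> (\<exists>C. psl3_subalg C \<and> M \<subset> C \<and> C \<subset> psl3)"
    using mx by (auto simp: psl3_maxsub_def)
  have "M \<union> P \<subseteq> psl3" using MP sP by (auto simp: psl3_subalg_def)
  note gen = gen_subalg[OF sL this]
  have "M \<subset> psl3_gen (M \<union> P)" using gen(2) PnM by blast
  then have "psl3_gen (M \<union> P) = psl3" using nC gen(1,3) by blast
  then have "psl3_covers (psl3_gen (M \<union> P)) M" using mx by (simp add: psl3_covers_def)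
  then show ?thesis using lm sP by (simp add: psl3_lm_def psl3_covers_def)
qed

definition pspan :: "'a::field^3^3 \<Rightarrow> 'a^3^3 \<Rightarrow> ('a^3^3) set set" where
  "pspan A B = {pcoset (msc a A + msc b B) | a b. True}"

lemma pspan_subalg:
  assumes tA: "mtrace A = 0" and tB: "mtrace B = 0" and AB: "mbr A B = 0"
  shows "psl3_subalg (pspan A B)"
  unfolding psl3_subalg_def
proof (intro conjI ballI allI)
  show "pspan A B \<subseteq> psl3"
    using tA tB by (auto simp: pspan_def psl3_def sl3_def mtrace_add mtrace_msc)
  have "pzero = pcoset (msc 0 A + msc 0 B)" by (simp add: pzero_def)
  then show "pzero \<in> pspan A B" unfolding pspan_def by blast
  fix P Q assume "P \<in> pspan A B" "Q \<in> pspan A B"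
  then obtain a b a' b' where P: "P = pcoset (msc a A + msc b B)"
    and Q: "Q = pcoset (msc a' A + msc b' B)" unfolding pspan_def by blast
  have "padd P Q = pcoset (msc (a + a') A + msc (b + b') B)"
    by (simp add: P Q padd_pcoset msc_add_scalar algebra_simps)
  then show "padd P Q \<in> pspan A B" unfolding pspan_def by blast
  have "pbr P Q = pcoset (msc 0 A + msc 0 B)"
    by (simp add: P Q pbr_pcoset mbr_commuting_comb[OF AB])
  then show "pbr P Q \<in> pspan A B" unfolding pspan_def by blast
next
  fix c P assume "P \<in> pspan A B"
  then obtain a b where P: "P = pcoset (msc a A + msc b B)" unfolding pspan_def by blast
  have "psc c P = pcoset (msc (c * a) A + msc (c * b) B)"
    by (simp add: P psc_pcoset msc_add)
  then show "psc c P \<in> pspan A B" unfolding pspan_def by blast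
qed

text \<open>A two-dimensional abelian plane does not cover the zero subalgebra: the line F A lies
  strictly in between.\<close>
lemma plane_not_cover_zero:
  assumes tA: "mtrace A = 0"
    and indA: "\<And>c. A \<noteq> mat c" and indB: "\<And>a c. B \<noteq> msc a A + mat c"
    and S: "S \<subseteq> {pzero}"
  shows "\<not> psl3_maxsub S (pspan A B)"
proof
  assume cov: "psl3_maxsub S (pspan A B)"
  have sC: "psl3_subalg (pspan A 0)"
    by (rule pspan_subalg) (use tA in \<open>simp_all add: mtrace_def mbr_def\<close>)
  have "pcoset (msc 1 A + msc 0 0) \<in> pspan A 0" unfolding pspan_def by blast
  moreover have "pcoset A \<noteq> pzero" using indA pcoset_eqD[of A 0] by (auto simp: pzero_def)
  moreover have "pzero \<in> pspan A 0" using sC by (simp add: psl3_subalg_def)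
  ultimately have S_C: "S \<subset> pspan A 0" using S by auto
  have "pcoset (msc a A + msc b 0) = pcoset (msc a A + msc 0 B)" for a b by simp
  then have "pspan A 0 \<subseteq> pspan A B" unfolding pspan_def by blast
  moreover have "pcoset (msc 0 A + msc 1 B) \<in> pspan A B" unfolding pspan_def by blast
  moreover have "pcoset B \<notin> pspan A 0" using indB by (auto simp: pspan_def dest!: pcoset_eqD)
  ultimately have "pspan A 0 \<subset> pspan A B" by auto
  then show False using cov sC S_C by (auto simp: psl3_maxsub_def)
qed

lemma lm_maximal_meets_plane:
  fixes M :: "('a::field^3^3) set set"
  assumes mx: "psl3_maxsub M psl3" and lm: "psl3_lm M"
    and tA: "mtrace A = 0" and tB: "mtrace B = 0" and AB: "mbr A B = 0"
    and indA: "\<And>c. A \<noteq> mat c" and indB: "\<And>a c. B \<noteq> msc a A + mat c"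
  shows "\<exists>a b. (a \<noteq> 0 \<or> b \<noteq> 0) \<and> pcoset (msc a A + msc b B) \<in> M"
proof (rule ccontr)
  assume miss: "\<not> ?thesis"
  have "pcoset (msc 1 A + msc 0 B) \<in> pspan A B" unfolding pspan_def by blast
  moreover have "pcoset (msc 1 A + msc 0 B) \<notin> M" using miss one_neq_zero by blast
  ultimately have "\<not> pspan A B \<subseteq> M" by blast
  then have cov: "psl3_maxsub (M \<inter> pspan A B) (pspan A B)"
    using lm_maximal_covers[OF mx lm pspan_subalg[OF tA tB AB]] by blast
  have "M \<inter> pspan A B \<subseteq> {pzero}"
  proof
    fix Q assume "Q \<in> M \<inter> pspan A B"
    then obtain a b where "Q = pcoset (msc a A + msc b B)" "Q \<in> M" unfolding pspan_def by blast
    then show "Q \<in> {pzero}" using miss by (cases "a = 0 \<and> b = 0") (auto simp: pzero_def)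
  qed
  then show False using plane_not_cover_zero[OF tA indA indB] cov by blast
qed

lemma normalize_plane_element:
  assumes sM: "psl3_subalg M" and ab: "a \<noteq> 0 \<or> b \<noteq> 0"
    and mem: "pcoset (msc a A + msc b B) \<in> M"
  shows "pcoset A \<in> M \<or> (\<exists>c. pcoset (msc c A + B) \<in> M)"
proof (cases "b = 0")
  case True
  with ab have "msc (inverse a) (msc a A + msc b B) = A" by (simp add: msc_add)
  then show ?thesis using subalg_sc[OF sM mem, of "inverse a"] by simp
next
  case False
  then have "msc (inverse b) (msc a A + msc b B) = msc (a / b) A + B"
    by (simp add: msc_add field_simps)
  then show ?thesis using subalg_sc[OF sM mem, of "inverse b"] by auto
qed

text \<open>For distinct indices i, j, k the planes F E_ik + F E_ij and F E_ik + F E_jk are abelian;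
  since [c E_ik + E_ij, c' E_ik + E_jk] = E_ik, a maximal lower modular subalgebra contains E_ik.\<close>
lemma lm_maximal_contains_unit:
  fixes M :: "('a::field^3^3) set set"
  assumes mx: "psl3_maxsub M psl3" and lm: "psl3_lm M"
    and distinct: "i \<noteq> j" "j \<noteq> k" "i \<noteq> k"
  shows "pcoset (E i k :: 'a^3^3) \<in> M"
proof -
  have sM: "psl3_subalg M" using mx by (simp add: psl3_maxsub_def)
  have hit: "pcoset (E i k) \<in> M \<or> (\<exists>c. pcoset (msc c (E i k) + E l m) \<in> M)"
    if lm_ne: "l \<noteq> m" "(l, m) \<noteq> (i, k)" and comm: "mbr (E i k) (E l m :: 'a^3^3) = 0" for l m
  proof -
    have trace: "mtrace (E i k :: 'a^3^3) = 0" "mtrace (E l m :: 'a^3^3) = 0"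
      using distinct lm_ne by (simp_all add: mtrace_E)
    have indA: "\<And>c. (E i k :: 'a^3^3) \<noteq> mat c" using distinct by (simp add: E_not_scalar)
    have indB: "\<And>a c. (E l m :: 'a^3^3) \<noteq> msc a (E i k) + mat c"
      using lm_ne by (simp add: E_not_in_span)
    obtain a b where "a \<noteq> 0 \<or> b \<noteq> 0" "pcoset (msc a (E i k) + msc b (E l m)) \<in> M"
      using lm_maximal_meets_plane[OF mx lm trace comm indA indB] by blast
    then show ?thesis by (rule normalize_plane_element[OF sM])
  qed
  have row: "pcoset (E i k) \<in> M \<or> (\<exists>c. pcoset (msc c (E i k) + E i j) \<in> M)"
    using hit[of i j] distinct by (simp add: mbr_def E_mult)
  have column: "pcoset (E i k) \<in> M \<or> (\<exists>c. pcoset (msc c (E i k) + E j k) \<in> M)"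
    using hit[of j k] distinct by (simp add: mbr_def E_mult)
  have bracket: "mbr (msc c (E i k) + E i j) (msc c' (E i k) + E j k) = (E i k :: 'a^3^3)" for c c'
    using distinct by (simp add: mbr_def matrix_add_ldistrib matrix_add_rdistrib
        msc_mult_left msc_mult_right E_mult)
  show ?thesis
  proof (rule ccontr)
    assume notin: "pcoset (E i k) \<notin> M"
    then obtain c c' where "pcoset (msc c (E i k) + E i j) \<in> M" "pcoset (msc c' (E i k) + E j k) \<in> M"
      using row column by blast
    then have "pcoset (mbr (msc c (E i k) + E i j) (msc c' (E i k) + E j k)) \<in> M"
      by (rule subalg_br[OF sM])
    then show False using notin by (simp add: bracket)
  qed
qed

section \<open>Matrix units generate psl_3(F)\<close>

lemma units_generate_psl3:
  fixes M :: "('a::field^3^3) set set"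
  assumes sM: "psl3_subalg M" and units: "\<And>i j. i \<noteq> j \<Longrightarrow> pcoset (E i j :: 'a^3^3) \<in> M"
  shows "psl3 \<subseteq> M"
proof
  fix P :: "('a^3^3) set" assume "P \<in> psl3"
  then obtain X where tr: "mtrace X = 0" and P: "P = pcoset X" using psl3_elem by blast
  have u: "pcoset (E 1 2 :: 'a^3^3) \<in> M" "pcoset (E 1 3 :: 'a^3^3) \<in> M"
    "pcoset (E 2 1 :: 'a^3^3) \<in> M" "pcoset (E 2 3 :: 'a^3^3) \<in> M"
    "pcoset (E 3 1 :: 'a^3^3) \<in> M" "pcoset (E 3 2 :: 'a^3^3) \<in> M"
    by (simp_all add: units)
  have "pcoset X \<in> M"
    by (subst sl3_decomposition[OF tr])
       (intro subalg_add[OF sM] subalg_sc[OF sM] subalg_br[OF sM] u)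
  then show "P \<in> M" using P by simp
qed

lemma third_index: "\<exists>k::3. k \<noteq> i \<and> k \<noteq> j"
proof -
  have "card {i, j} < card (UNIV :: 3 set)" by (simp add: card_insert_if)
  then obtain k where "k \<notin> {i, j}" by (metis card_mono finite subsetI leD)
  then show ?thesis by blast
qed

theorem proposition2p5:
  assumes "CHAR('a::field) = 3"
  shows "\<not> (\<exists>M :: ('a ^3^3) set set. psl3_maxsub M psl3 \<and> psl3_sm M)"
proof
  assume "\<exists>M :: ('a ^3^3) set set. psl3_maxsub M psl3 \<and> psl3_sm M"
  then obtain M :: "('a ^3^3) set set" where mx: "psl3_maxsub M psl3" and "psl3_sm M" by blast
  then have lm: "psl3_lm M" by (simp add: psl3_sm_def)
  have sM: "psl3_subalg M" and proper: "M \<subset> psl3" using mx by (auto simp: psl3_maxsub_def)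
  have units: "pcoset (E i j :: 'a^3^3) \<in> M" if "i \<noteq> j" for i j
  proof -
    obtain k :: 3 where "k \<noteq> i" "k \<noteq> j" using third_index by blast
    then show ?thesis using lm_maximal_contains_unit[OF mx lm, of i k j] \<open>i \<noteq> j\<close> by simp
  qed
  show False using units_generate_psl3[OF sM units] proper by blast
qed

end
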